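(* Let ${\mathcal M}:{\mathbb E}\to{\mathbb F}$ be a surjective linear map between finite-dimensional Euclidean spaces, $\mathcal{K}\subseteq{\mathbb E}$ a convex cone, $b\in{\mathbb F}$, and suppose ${\mathcal F}=\{X\in\mathcal{K}:{\mathcal M}(X)=b\}\neq\emptyset$. Then the singularity degree of the system ${\mathcal F}$ over $\mathcal{K}$ equals the singularity degree of the face $\operatorname{face}(b,{\mathcal M}(\mathcal{K}))$ over the cone ${\mathcal M}(\mathcal{K})$. *)

theory Defs
  imports "HOL-Analysis.Analysis"
begin

definition dualcone :: "'a::real_inner set \<Rightarrow> 'a set" where
  "dualcone S = {y. \<forall>x\<in>S. inner x y \<ge> 0}"

definition minface :: "'a::real_vector set \<Rightarrow> 'a set \<Rightarrow> 'a set" where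
  "minface K S = \<Inter>{T. T face_of K \<and> S \<subseteq> T}"

fun face_chain :: "'a::real_inner set \<Rightarrow> (nat \<Rightarrow> 'a) \<Rightarrow> nat \<Rightarrow> 'a set" where
  "face_chain C z 0 = C"
| "face_chain C z (Suc i) = face_chain C z i \<inter> {x. inner (z i) x = 0}"

definition sd_face :: "'a::real_inner set \<Rightarrow> 'a set \<Rightarrow> nat" where
  "sd_face C f = (LEAST k. \<exists>z. (\<forall>i<k. z i \<in> dualcone (face_chain C z i))
                               \<and> face_chain C z k = f)"

text \<open>Facial reduction chain for the system {X in K. M X = b}:
  K_0 = K, K_(i+1) = K_i intersected with the orthogonal complement of M^* (y i).\<close>
fun sys_chain :: "('a::real_inner \<Rightarrow> 'b::real_inner) \<Rightarrow> 'a set \<Rightarrow> (nat \<Rightarrow> 'b) \<Rightarrow> nat \<Rightarrow> 'a set" where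
  "sys_chain M K y 0 = K"
| "sys_chain M K y (Suc i) = sys_chain M K y i \<inter> {x. inner (M x) (y i) = 0}"

definition sd_sys :: "('a::real_inner \<Rightarrow> 'b::real_inner) \<Rightarrow> 'a set \<Rightarrow> 'b \<Rightarrow> nat" where
  "sd_sys M K b = (LEAST k. \<exists>y.
      (\<forall>i<k. (\<forall>x\<in>sys_chain M K y i. inner (M x) (y i) \<ge> 0) \<and> inner b (y i) = 0)
      \<and> sys_chain M K y k = minface K {X\<in>K. M X = b})"

end

theory Submission
  imports Defs
begin

text \<open>
  A relative interior point \<open>x\<^sub>0\<close> of the feasible set \<open>F = {X \<in> K. M X = b}\<close> generates the
  minimal face of \<open>K\<close> containing \<open>F\<close>: in a convex cone the minimal face of a point \<open>p\<close>
  consists of the \<open>c \<in> K\<close> with \<open>p - \<alpha> c \<in> K\<close> for some \<open>\<alpha> > 0\<close>. Pushing this description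
  through \<open>M\<close> shows that the minimal face of \<open>F\<close> is the preimage of the minimal face of
  \<open>b = M x\<^sub>0\<close> in \<open>M K\<close>. The facial reduction chains of the system are likewise the
  preimages of the chains of \<open>M K\<close>, so the certificates of both singularity degrees
  correspond one to one. Note that \<open>\<langle>b, y\<^sub>i\<rangle> = 0\<close> is automatic for a chain ending in
  a face that contains \<open>b\<close>.
\<close>

definition cone_face_at :: "'a::real_vector set \<Rightarrow> 'a \<Rightarrow> 'a set" where
  "cone_face_at S p = {c\<in>S. \<exists>\<alpha>>0. p - \<alpha> *\<^sub>R c \<in> S}"

lemma convex_diff_scaleR_le:
  assumes "convex S" "p \<in> S" "p - a *\<^sub>R c \<in> S" "0 \<le> a'" "a' \<le> a"
  shows "p - a' *\<^sub>R c \<in> S"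
proof (cases "a = 0")
  case True
  then show ?thesis using assms by simp
next
  case False
  then have a: "a > 0" using assms by simp
  have "p - a' *\<^sub>R c = (a'/a) *\<^sub>R (p - a *\<^sub>R c) + (1 - a'/a) *\<^sub>R p"
    using a by (simp add: algebra_simps)
  also have "\<dots> \<in> S"
    using assms a by (intro convexD) auto
  finally show ?thesis .
qed

lemma cone_face_at_subset_face:
  assumes S: "convex_cone S" and T: "T face_of S" and "p \<in> T"
  shows "cone_face_at S p \<subseteq> T"
proof
  fix y assume "y \<in> cone_face_at S p"
  then obtain \<beta> where yS: "y \<in> S" and "\<beta> > 0" and "p - \<beta> *\<^sub>R y \<in> S"
    by (auto simp: cone_face_at_def)
  define \<beta>' where "\<beta>' = min \<beta> (1/2)"
  have \<beta>': "0 < \<beta>'" "\<beta>' \<le> \<beta>" "\<beta>' < 1" using \<open>\<beta> > 0\<close> by (auto simp: \<beta>'_def)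
  have pS: "p \<in> S" using T \<open>p \<in> T\<close> face_of_imp_subset by blast
  have "p - \<beta>' *\<^sub>R y \<in> S"
    using convex_diff_scaleR_le[OF _ pS \<open>p - \<beta> *\<^sub>R y \<in> S\<close>] S \<beta>'
    by (simp add: convex_cone_def)
  \<comment> \<open>\<open>p\<close> lies in the open segment between \<open>y\<close> and \<open>v\<close>, so the face \<open>T\<close> absorbs \<open>y\<close>.\<close>
  define v where "v = (1/(1-\<beta>')) *\<^sub>R (p - \<beta>' *\<^sub>R y)"
  have vS: "v \<in> S"
    unfolding v_def using \<beta>' \<open>p - \<beta>' *\<^sub>R y \<in> S\<close> by (intro convex_cone_scaleR[OF S]) auto
  have pv: "p = (1 - (1-\<beta>')) *\<^sub>R y + (1-\<beta>') *\<^sub>R v"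
    using \<beta>' by (simp add: v_def)
  show "y \<in> T"
  proof (cases "y = v")
    case True
    then show ?thesis using pv \<open>p \<in> T\<close> by (simp add: algebra_simps)
  next
    case False
    then have "p \<in> open_segment y v"
      unfolding in_segment using \<beta>' pv by (intro conjI exI[of _ "1-\<beta>'"]) auto
    then show ?thesis using T yS vS \<open>p \<in> T\<close> unfolding face_of_def by blast
  qed
qed

lemma convex_cone_face_at:
  assumes S: "convex_cone S" and pS: "p \<in> S"
  shows "convex (cone_face_at S p)"
  unfolding convex_def
proof (intro ballI allI impI)
  fix x y and u v :: real
  assume "x \<in> cone_face_at S p" "y \<in> cone_face_at S p" and uv: "0 \<le> u" "0 \<le> v" "u + v = 1"
  then obtain a1 a2 where x: "x \<in> S" "a1 > 0" "p - a1 *\<^sub>R x \<in> S"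
    and y: "y \<in> S" "a2 > 0" "p - a2 *\<^sub>R y \<in> S"
    by (auto simp: cone_face_at_def)
  define a where "a = min a1 a2"
  have convS: "convex S" using S by (simp add: convex_cone_def)
  have "p - a *\<^sub>R x \<in> S" "p - a *\<^sub>R y \<in> S"
    using convex_diff_scaleR_le[OF convS pS] x y by (auto simp: a_def)
  moreover have "p - a *\<^sub>R (u *\<^sub>R x + v *\<^sub>R y) = u *\<^sub>R (p - a *\<^sub>R x) + v *\<^sub>R (p - a *\<^sub>R y)"
    using uv by (simp add: algebra_simps flip: scaleR_add_left)
  ultimately have "p - a *\<^sub>R (u *\<^sub>R x + v *\<^sub>R y) \<in> S"
    using uv convexD[OF convS] by simp
  moreover have "u *\<^sub>R x + v *\<^sub>R y \<in> S"
    using uv x y convexD[OF convS] by simp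
  moreover have "a > 0" using x y by (simp add: a_def)
  ultimately show "u *\<^sub>R x + v *\<^sub>R y \<in> cone_face_at S p"
    by (auto simp: cone_face_at_def)
qed

lemma cone_face_at_face_of:
  assumes S: "convex_cone S" and pS: "p \<in> S"
  shows "cone_face_at S p face_of S"
  unfolding face_of_def
proof (intro conjI ballI impI)
  show "cone_face_at S p \<subseteq> S" by (auto simp: cone_face_at_def)
  show "convex (cone_face_at S p)" using convex_cone_face_at[OF assms] .
next
  fix a d x
  assume aS: "a \<in> S" and dS: "d \<in> S" and "x \<in> cone_face_at S p" and "x \<in> open_segment a d"
  then obtain \<alpha> u where \<alpha>: "\<alpha> > 0" "p - \<alpha> *\<^sub>R x \<in> S"
    and u: "0 < u" "u < 1" "x = (1 - u) *\<^sub>R a + u *\<^sub>R d"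
    by (auto simp: cone_face_at_def in_segment)
  have "p - (\<alpha> * (1-u)) *\<^sub>R a = (p - \<alpha> *\<^sub>R x) + (\<alpha> * u) *\<^sub>R d"
    unfolding u(3) by (simp add: algebra_simps)
  also have "\<dots> \<in> S"
    using \<alpha> u dS by (intro convex_cone_add[OF S] convex_cone_scaleR[OF S]) auto
  finally show "a \<in> cone_face_at S p"
    using aS \<alpha> u by (auto simp: cone_face_at_def intro!: exI[of _ "\<alpha> * (1-u)"])
  have "p - (\<alpha> * u) *\<^sub>R d = (p - \<alpha> *\<^sub>R x) + (\<alpha> * (1-u)) *\<^sub>R a"
    unfolding u(3) by (simp add: algebra_simps)
  also have "\<dots> \<in> S"
    using \<alpha> u aS by (intro convex_cone_add[OF S] convex_cone_scaleR[OF S]) auto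
  finally show "d \<in> cone_face_at S p"
    using dS \<alpha> u by (auto simp: cone_face_at_def intro!: exI[of _ "\<alpha> * u"])
qed

lemma subset_cone_face_at_rel_interior:
  fixes F :: "'a::euclidean_space set"
  assumes S: "convex_cone S" and F: "convex F" "F \<subseteq> S" and p: "p \<in> rel_interior F"
  shows "F \<subseteq> cone_face_at S p"
proof
  fix x assume "x \<in> F"
  then obtain e where e: "e > 1" "(1 - e) *\<^sub>R x + e *\<^sub>R p \<in> F"
    using convex_rel_interior_iff[OF F(1)] p by blast
  have "p - ((e-1)/e) *\<^sub>R x = (1/e) *\<^sub>R ((1 - e) *\<^sub>R x + e *\<^sub>R p)"
    using e by (simp add: algebra_simps diff_divide_distrib)
  also have "\<dots> \<in> S" using e F(2) by (intro convex_cone_scaleR[OF S]) auto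
  finally show "x \<in> cone_face_at S p"
    using \<open>x \<in> F\<close> F(2) e by (auto simp: cone_face_at_def intro!: exI[of _ "(e-1)/e"])
qed

lemma minface_eq_cone_face_at:
  fixes F :: "'a::euclidean_space set"
  assumes S: "convex_cone S" and F: "convex F" "F \<subseteq> S" and p: "p \<in> rel_interior F"
  shows "minface S F = cone_face_at S p"
proof
  have "p \<in> S" using p F(2) rel_interior_subset by blast
  then show "minface S F \<subseteq> cone_face_at S p"
    unfolding minface_def
    using cone_face_at_face_of[OF S] subset_cone_face_at_rel_interior[OF assms] by blast
  show "cone_face_at S p \<subseteq> minface S F"
    unfolding minface_def
    using cone_face_at_subset_face[OF S] p rel_interior_subset by blast
qed

lemma convex_feasible_set:
  assumes "linear M" "convex K"
  shows "convex {X\<in>K. M X = b}"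
proof -
  have "convex {X. M X = b}"
    using convex_linear_vimage[OF assms(1) convex_singleton] by (simp add: vimage_def)
  then show ?thesis using assms(2) by (simp add: Collect_conj_eq convex_Int)
qed

lemma cone_face_at_linear_preimage:
  fixes M :: "'a::euclidean_space \<Rightarrow> 'b::real_vector"
  assumes lin: "linear M" and K: "convex_cone K"
    and p: "p \<in> rel_interior {X\<in>K. M X = M p}"
  shows "cone_face_at K p = {y\<in>K. M y \<in> cone_face_at (M ` K) (M p)}"
proof (intro set_eqI iffI)
  fix y assume "y \<in> cone_face_at K p"
  then obtain \<alpha> where "y \<in> K" "\<alpha> > 0" "p - \<alpha> *\<^sub>R y \<in> K" by (auto simp: cone_face_at_def)
  moreover have "M p - \<alpha> *\<^sub>R M y = M (p - \<alpha> *\<^sub>R y)" by (simp add: linear_diff[OF lin] linear_scale[OF lin])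
  ultimately show "y \<in> {y\<in>K. M y \<in> cone_face_at (M ` K) (M p)}"
    by (auto simp: cone_face_at_def)
next
  fix y assume "y \<in> {y\<in>K. M y \<in> cone_face_at (M ` K) (M p)}"
  then obtain \<alpha> w where "y \<in> K" "\<alpha> > 0" "w \<in> K" "M w = M p - \<alpha> *\<^sub>R M y"
    by (auto simp: cone_face_at_def)
  \<comment> \<open>\<open>w + \<alpha> y\<close> is feasible, so \<open>p\<close> can be moved backwards along it, and hence along \<open>y\<close>.\<close>
  have convF: "convex {X\<in>K. M X = M p}"
    using K by (simp add: convex_cone_def convex_feasible_set[OF lin])
  have "w + \<alpha> *\<^sub>R y \<in> {X\<in>K. M X = M p}"
    using \<open>y \<in> K\<close> \<open>\<alpha> > 0\<close> \<open>w \<in> K\<close> \<open>M w = _\<close>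
    by (auto simp: linear_add[OF lin] linear_scale[OF lin] intro!: convex_cone_add[OF K] convex_cone_scaleR[OF K])
  then obtain t where "t > 0" "p - t *\<^sub>R (w + \<alpha> *\<^sub>R y) \<in> K"
    using subset_cone_face_at_rel_interior[OF K convF _ p] by (auto simp: cone_face_at_def)
  moreover have "p - (t * \<alpha>) *\<^sub>R y = (p - t *\<^sub>R (w + \<alpha> *\<^sub>R y)) + t *\<^sub>R w"
    by (simp add: algebra_simps)
  moreover have "t *\<^sub>R w \<in> K"
    using \<open>t > 0\<close> \<open>w \<in> K\<close> by (simp add: convex_cone_scaleR[OF K])
  ultimately have "p - (t * \<alpha>) *\<^sub>R y \<in> K"
    using convex_cone_add[OF K] by metis
  then show "y \<in> cone_face_at K p"
    using \<open>y \<in> K\<close> \<open>t > 0\<close> \<open>\<alpha> > 0\<close> by (auto simp: cone_face_at_def intro!: exI[of _ "t * \<alpha>"])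
qed

lemma minface_feasible_eq_preimage:
  fixes M :: "'a::euclidean_space \<Rightarrow> 'b::euclidean_space"
  assumes lin: "linear M" and K: "convex_cone K" and ne: "{X\<in>K. M X = b} \<noteq> {}"
  shows "minface K {X\<in>K. M X = b} = {x\<in>K. M x \<in> minface (M ` K) {b}}"
proof -
  have convF: "convex {X\<in>K. M X = b}"
    using K by (simp add: convex_cone_def convex_feasible_set[OF lin])
  then obtain p where p: "p \<in> rel_interior {X\<in>K. M X = b}"
    using rel_interior_eq_empty ne by blast
  then have "p \<in> K" "M p = b" using rel_interior_subset by blast+
  then have "b \<in> M ` K" by blast
  have "minface K {X\<in>K. M X = b} = cone_face_at K p"
    using minface_eq_cone_face_at[OF K convF _ p] by blast
  also have "\<dots> = {y\<in>K. M y \<in> cone_face_at (M ` K) b}"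
    using cone_face_at_linear_preimage[OF lin K] p \<open>M p = b\<close> by blast
  also have "cone_face_at (M ` K) b = minface (M ` K) {b}"
    using minface_eq_cone_face_at[of "M ` K" "{b}" b] convex_cone_linear_image[of K M]
      K lin \<open>b \<in> M ` K\<close> by simp
  finally show ?thesis .
qed

lemma face_chain_subset: "face_chain C z i \<subseteq> C"
  by (induction i) auto

lemma face_chain_antimono: "i \<le> j \<Longrightarrow> face_chain C z j \<subseteq> face_chain C z i"
  by (induction j) (auto simp: le_Suc_eq)

lemma sys_chain_eq_preimage: "sys_chain M K z i = {x\<in>K. M x \<in> face_chain (M ` K) z i}"
  by (induction i) (auto simp: inner_commute)

lemma image_sys_chain: "M ` sys_chain M K z i = face_chain (M ` K) z i"
  using face_chain_subset[of "M ` K" z i] unfolding sys_chain_eq_preimage by blast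

lemma sys_chain_step_iff_dualcone:
  "(\<forall>x\<in>sys_chain M K y i. inner (M x) (y i) \<ge> 0) \<longleftrightarrow> y i \<in> dualcone (face_chain (M ` K) y i)"
  unfolding dualcone_def image_sys_chain[symmetric] by blast

lemma sys_chain_eq_preimage_iff:
  assumes "G \<subseteq> M ` K"
  shows "sys_chain M K y k = {x\<in>K. M x \<in> G} \<longleftrightarrow> face_chain (M ` K) y k = G"
proof
  assume "sys_chain M K y k = {x\<in>K. M x \<in> G}"
  then have "face_chain (M ` K) y k = M ` {x\<in>K. M x \<in> G}"
    by (simp flip: image_sys_chain)
  also have "\<dots> = G" using assms by blast
  finally show "face_chain (M ` K) y k = G" .
qed (simp add: sys_chain_eq_preimage)

lemma face_chain_orthogonal:
  assumes "b \<in> face_chain C z k" "i < k"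
  shows "inner b (z i) = 0"
  using assms face_chain_antimono[of "Suc i" k C z] by (auto simp: inner_commute)

theorem mainTheorem6:
  fixes M :: "'a::euclidean_space \<Rightarrow> 'b::euclidean_space"
    and K :: "'a set" and b :: 'b
  assumes "linear M" and "surj M"
    and "convex_cone K"
    and "{X\<in>K. M X = b} \<noteq> {}"
  shows "sd_sys M K b = sd_face (M ` K) (minface (M ` K) {b})"
proof -
  define G where "G = minface (M ` K) {b}"
  have "b \<in> G" by (simp add: G_def minface_def)
  have "convex (M ` K)"
    using convex_cone_linear_image assms(1,3) by (auto simp: convex_cone_def)
  then have "G \<subseteq> M ` K"
    using assms(4) face_of_refl by (auto simp: G_def minface_def)
  have "\<And>k. (\<exists>y. (\<forall>i<k. (\<forall>x\<in>sys_chain M K y i. inner (M x) (y i) \<ge> 0) \<and> inner b (y i) = 0)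
                 \<and> sys_chain M K y k = minface K {X\<in>K. M X = b})
         \<longleftrightarrow> (\<exists>z. (\<forall>i<k. z i \<in> dualcone (face_chain (M ` K) z i)) \<and> face_chain (M ` K) z k = G)"
    unfolding minface_feasible_eq_preimage[OF assms(1,3,4), folded G_def]
      sys_chain_step_iff_dualcone sys_chain_eq_preimage_iff[OF \<open>G \<subseteq> M ` K\<close>]
    using face_chain_orthogonal \<open>b \<in> G\<close> by blast
  then show ?thesis unfolding sd_sys_def sd_face_def G_def[symmetric] by presburger
qed

end
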